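(* For any $\delta>0$ there exists $c=c(\delta)>0$ such that the following holds. For any $\varepsilon\in(0,c)$, any simple graph $G=(V,E)$ on $n\ge\varepsilon^{-2}$ vertices with minimal degree at least $\delta n$, any $U\subset V$ with $|U|\ge\varepsilon\sqrt n$ and any vertex $v$ of $G$, \[ \Pr_v\left(X\left[0,2\left(t^G_{\mathrm{mix}}(\varepsilon/2)+\lfloor\sqrt n\rfloor\right)\right]\cap U=\varnothing\right)\le 1-\frac{\varepsilon\delta}{4}, \] where $X$ is the (non-lazy) simple random walk on $G$ started at $v$.
   Context: $t^G_{\mathrm{mix}}(\varepsilon)=\max_v\min\{t\ge0:\|\mathbf p^t(v,\cdot)-\pi\|_{\mathrm{TV}}<\varepsilon\}$ is defined for the lazy random walk on $G$ (stay put with probability $1/2$, otherwise move to a uniform neighbour), with $\pi(v)=\deg(v)/2|E|$ and total variation distance $\frac12\sum_v|\mu(v)-\nu(v)|$. For $a,b\ge0$, $X[a,b]$ denotes the set $\{X_i: i\in[\lceil a\rceil,\lfloor b\rfloor]\cap\mathbb N\}$.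
   Formalization: From every vertex of G the lazy random walk comes strictly within total variation distance $\varepsilon/2$ of $\pi$ at some time, so $t^G_{\mathrm{mix}}(\varepsilon/2)$ is assumed finite. The statement above fails without it. *)

theory Defs
  imports Complex_Main
begin

definition simple_graph :: "'a set \<Rightarrow> ('a \<Rightarrow> 'a \<Rightarrow> bool) \<Rightarrow> bool" where
  "simple_graph V E \<longleftrightarrow> finite V \<and> (\<forall>u w. E u w \<longrightarrow> u \<in> V \<and> w \<in> V) \<and>
     (\<forall>u w. E u w \<longrightarrow> E w u) \<and> (\<forall>u. \<not> E u u)"

definition deg :: "'a set \<Rightarrow> ('a \<Rightarrow> 'a \<Rightarrow> bool) \<Rightarrow> 'a \<Rightarrow> nat" where
  "deg V E u = card {w \<in> V. E u w}"

definition lazy_P :: "'a set \<Rightarrow> ('a \<Rightarrow> 'a \<Rightarrow> bool) \<Rightarrow> 'a \<Rightarrow> 'a \<Rightarrow> real" where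
  "lazy_P V E u w = (if u = w then 1/2 else 0)
      + (if E u w then 1 / (2 * real (deg V E u)) else 0)"

fun lazy_pt :: "'a set \<Rightarrow> ('a \<Rightarrow> 'a \<Rightarrow> bool) \<Rightarrow> nat \<Rightarrow> 'a \<Rightarrow> 'a \<Rightarrow> real" where
  "lazy_pt V E 0 v w = (if v = w then 1 else 0)"
| "lazy_pt V E (Suc t) v w = (\<Sum>u\<in>V. lazy_pt V E t v u * lazy_P V E u w)"

text \<open>Stationary distribution pi(w) = deg(w) / 2|E|  (2|E| = sum of degrees).\<close>
definition stat_dist :: "'a set \<Rightarrow> ('a \<Rightarrow> 'a \<Rightarrow> bool) \<Rightarrow> 'a \<Rightarrow> real" where
  "stat_dist V E w = real (deg V E w) / real (\<Sum>u\<in>V. deg V E u)"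

definition tv_dist :: "'a set \<Rightarrow> ('a \<Rightarrow> real) \<Rightarrow> ('a \<Rightarrow> real) \<Rightarrow> real" where
  "tv_dist V \<mu> \<nu> = (1/2) * (\<Sum>w\<in>V. \<bar>\<mu> w - \<nu> w\<bar>)"

text \<open>Mixing time t_mix(eps) = max_v min { t : TV(p^t(v,.), pi) < eps }.
  Meaningful when for every v such t exists (this is assumed in the theorem).\<close>
definition t_mix :: "'a set \<Rightarrow> ('a \<Rightarrow> 'a \<Rightarrow> bool) \<Rightarrow> real \<Rightarrow> nat" where
  "t_mix V E eps = Max ((\<lambda>v. LEAST t. tv_dist V (lazy_pt V E t v) (stat_dist V E) < eps) ` V)"

text \<open>Probability that the (non-lazy) simple random walk started at v has
  X_0, ..., X_k all outside U:  computed by first-step decomposition.\<close>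
fun srw_avoid :: "'a set \<Rightarrow> ('a \<Rightarrow> 'a \<Rightarrow> bool) \<Rightarrow> 'a set \<Rightarrow> nat \<Rightarrow> 'a \<Rightarrow> real" where
  "srw_avoid V E U 0 v = (if v \<in> U then 0 else 1)"
| "srw_avoid V E U (Suc k) v = (if v \<in> U then 0 else
      (\<Sum>w\<in>{w\<in>V. E v w}. srw_avoid V E U k w) / real (deg V E v))"

end

theory Submission
  imports Defs
begin

(* The simple random walk avoids U at least as well as the lazy walk, so it suffices to bound
   the probability that the lazy walk started at v hits U. Let t \<le> t_mix(\<epsilon>/2) be a time at
   which it is \<epsilon>/2-close to \<pi>, and s = \<lfloor>sqrt n\<rfloor>, and count the expected visits of the lazy
   walk to U during [t + s, t + 2s]. By closeness to \<pi> this count is about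
   (s + 1) \<pi>(U) \<ge> (s + 1) |U| \<delta> / n \<ge> \<epsilon> \<delta>, as |U| \<ge> \<epsilon> sqrt n. On the other hand the minimum degree
   gives p^j(x, w) \<le> [x = w] 2^-j + 1/(\<delta> n), so from any start the expected number of visits to
   U in a window of length m is at most 2 + (m + 1) |U| / (\<delta> n); hence the count is at most the
   hitting probability times 2 + (2s + 1) |U| / (\<delta> n). Comparing the two bounds gives
   hitting probability at least \<epsilon> \<delta> / 4 once \<epsilon> is small compared with \<delta> and \<delta>^2. *)

lemma sum_mult_diff_le_tv_dist:
  fixes \<mu> \<nu> f :: "'a \<Rightarrow> real"
  assumes "finite A" and "sum \<mu> A = 1" and "sum \<nu> A = 1"
    and "\<And>x. x \<in> A \<Longrightarrow> 0 \<le> f x \<and> f x \<le> M"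
  shows "(\<Sum>x\<in>A. \<nu> x * f x) - (\<Sum>x\<in>A. \<mu> x * f x) \<le> M * tv_dist A \<mu> \<nu>"
proof -
  \<comment> \<open>Since \<open>\<mu>\<close> and \<open>\<nu>\<close> have the same mass, \<open>f\<close> may be centred at \<open>M / 2\<close>.\<close>
  have centre: "(\<Sum>x\<in>A. (\<nu> x - \<mu> x) * (M / 2)) = 0"
    using assms(2,3) by (simp only: sum_distrib_right[symmetric] sum_subtractf) simp
  have "(\<Sum>x\<in>A. \<nu> x * f x) - (\<Sum>x\<in>A. \<mu> x * f x) = (\<Sum>x\<in>A. (\<nu> x - \<mu> x) * (f x - M / 2))"
    using centre by (simp add: sum_subtractf left_diff_distrib right_diff_distrib)
  also have "\<dots> \<le> (\<Sum>x\<in>A. \<bar>\<mu> x - \<nu> x\<bar> * (M / 2))"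
  proof (rule sum_mono)
    fix x assume "x \<in> A"
    then have "\<bar>f x - M / 2\<bar> \<le> M / 2"
      using assms(4) by (auto simp: abs_if)
    then have "\<bar>\<mu> x - \<nu> x\<bar> * \<bar>f x - M / 2\<bar> \<le> \<bar>\<mu> x - \<nu> x\<bar> * (M / 2)"
      by (rule mult_left_mono) simp
    moreover have "(\<nu> x - \<mu> x) * (f x - M / 2) \<le> \<bar>\<mu> x - \<nu> x\<bar> * \<bar>f x - M / 2\<bar>"
      by (metis abs_ge_self abs_minus_commute abs_mult)
    ultimately show "(\<nu> x - \<mu> x) * (f x - M / 2) \<le> \<bar>\<mu> x - \<nu> x\<bar> * (M / 2)"
      by linarith
  qed
  also have "\<dots> = (\<Sum>x\<in>A. \<bar>\<mu> x - \<nu> x\<bar>) * (M / 2)"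
    by (rule sum_distrib_right[symmetric])
  also have "\<dots> = M * tv_dist A \<mu> \<nu>"
    by (simp add: tv_dist_def)
  finally show ?thesis .
qed

lemma sum_half_powers_le:
  "(\<Sum>j = a..b. (1 / 2 :: real) ^ j) \<le> 2 * (1 / 2) ^ a"
proof (cases "a \<le> b")
  case True
  then have "(1 / 2) * (\<Sum>j = a..b. (1 / 2 :: real) ^ j) = (1 / 2) ^ a - (1 / 2) ^ Suc b"
    using sum_gp_multiplied[of a b "1 / 2 :: real"] by simp
  then show ?thesis by simp
qed simp

locale walk_graph =
  fixes V :: "'a set" and E :: "'a \<Rightarrow> 'a \<Rightarrow> bool"
  assumes simple: "simple_graph V E"
    and deg_pos: "\<And>u. u \<in> V \<Longrightarrow> deg V E u > 0"
begin

lemma finite_V: "finite V"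
  using simple by (simp add: simple_graph_def)

lemma edge_in_V: "E u w \<Longrightarrow> u \<in> V \<and> w \<in> V"
  using simple by (simp add: simple_graph_def)

lemma edge_sym: "E u w \<Longrightarrow> E w u"
  using simple by (simp add: simple_graph_def)

lemma edge_irrefl: "\<not> E u u"
  using simple by (simp add: simple_graph_def)

lemma card_in_neighbours: "card {x \<in> V. E x u} = deg V E u"
  unfolding deg_def by (rule arg_cong[where f = card]) (auto dest: edge_sym)

lemma lazy_P_nonneg: "lazy_P V E u w \<ge> 0"
  by (simp add: lazy_P_def)

lemma lazy_P_sum_mult:
  assumes "x \<in> V"
  shows "(\<Sum>y\<in>V. lazy_P V E x y * f y)
    = f x / 2 + (\<Sum>y\<in>{w \<in> V. E x w}. f y) / (2 * real (deg V E x))"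
proof -
  have "(\<Sum>y\<in>V. lazy_P V E x y * f y)
      = (\<Sum>y\<in>V. if x = y then f y / 2 else 0)
        + (\<Sum>y\<in>V. if E x y then f y / (2 * real (deg V E x)) else 0)"
    unfolding sum.distrib[symmetric] by (rule sum.cong) (auto simp: lazy_P_def field_simps)
  also have "(\<Sum>y\<in>V. if E x y then f y / (2 * real (deg V E x)) else 0)
      = (\<Sum>y\<in>{w \<in> V. E x w}. f y / (2 * real (deg V E x)))"
    using sum.inter_filter[OF finite_V, of "\<lambda>y. f y / (2 * real (deg V E x))" "E x"] by simp
  finally show ?thesis
    using assms finite_V by (simp add: sum_divide_distrib)
qed

lemma lazy_P_row_sum: "x \<in> V \<Longrightarrow> (\<Sum>y\<in>V. lazy_P V E x y) = 1"
  using lazy_P_sum_mult[of x "\<lambda>_. 1"] deg_pos[of x] by (simp add: deg_def)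

lemma lazy_pt_nonneg: "lazy_pt V E t x w \<ge> 0"
  by (induction t arbitrary: w) (auto intro!: sum_nonneg mult_nonneg_nonneg lazy_P_nonneg)

lemma lazy_pt_row_sum: "x \<in> V \<Longrightarrow> (\<Sum>w\<in>V. lazy_pt V E t x w) = 1"
proof (induction t)
  case 0
  then show ?case using finite_V by simp
next
  case (Suc t)
  have "(\<Sum>w\<in>V. lazy_pt V E (Suc t) x w) = (\<Sum>u\<in>V. lazy_pt V E t x u * (\<Sum>w\<in>V. lazy_P V E u w))"
    by (simp add: sum_distrib_left) (rule sum.swap)
  then show ?case
    using Suc by (simp add: lazy_P_row_sum)
qed

lemma lazy_pt_outside: "x \<in> V \<Longrightarrow> w \<notin> V \<Longrightarrow> lazy_pt V E t x w = 0"
  by (cases t) (auto simp: lazy_P_def dest: edge_in_V intro!: sum.neutral)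

lemma lazy_pt_add:
  assumes "x \<in> V"
  shows "lazy_pt V E (s + t) x w = (\<Sum>y\<in>V. lazy_pt V E s x y * lazy_pt V E t y w)"
proof (induction t arbitrary: w)
  case 0
  show ?case
    using assms finite_V lazy_pt_outside by (cases "w \<in> V") (auto simp: if_distrib cong: if_cong)
next
  case (Suc t)
  have "lazy_pt V E (s + Suc t) x w
      = (\<Sum>u\<in>V. \<Sum>y\<in>V. lazy_pt V E s x y * (lazy_pt V E t y u * lazy_P V E u w))"
    using Suc by (simp add: sum_distrib_right mult.assoc)
  also have "\<dots> = (\<Sum>y\<in>V. \<Sum>u\<in>V. lazy_pt V E s x y * (lazy_pt V E t y u * lazy_P V E u w))"
    by (rule sum.swap)
  finally show ?case
    by (simp add: sum_distrib_left)
qed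

lemma lazy_pt_Suc_left:
  assumes "x \<in> V"
  shows "lazy_pt V E (Suc t) x w = (\<Sum>y\<in>V. lazy_P V E x y * lazy_pt V E t y w)"
proof -
  have "lazy_pt V E 1 x y = lazy_P V E x y" for y
    using assms finite_V by (simp add: of_bool_def[symmetric])
  then show ?thesis
    using lazy_pt_add[OF assms, of 1 t] by simp
qed

lemma degree_sum_pos: "V \<noteq> {} \<Longrightarrow> (\<Sum>u\<in>V. deg V E u) > 0"
  using finite_V deg_pos by (metis all_not_in_conv less_le_trans member_le_sum zero_le)

lemma stat_dist_sum:
  assumes "V \<noteq> {}"
  shows "(\<Sum>x\<in>V. stat_dist V E x) = 1"
proof -
  have "(\<Sum>x\<in>V. stat_dist V E x) = real (\<Sum>u\<in>V. deg V E u) / real (\<Sum>u\<in>V. deg V E u)"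
    unfolding stat_dist_def sum_divide_distrib[symmetric] of_nat_sum ..
  then show ?thesis
    using degree_sum_pos[OF assms] by (simp del: of_nat_sum)
qed

lemma stat_dist_lazy_P:
  assumes "u \<in> V"
  shows "(\<Sum>x\<in>V. stat_dist V E x * lazy_P V E x u) = stat_dist V E u"
proof -
  define S where "S = real (\<Sum>u\<in>V. deg V E u)"
  have "(\<Sum>x\<in>V. stat_dist V E x * lazy_P V E x u)
      = (\<Sum>x\<in>V. if x = u then stat_dist V E x / 2 else 0) + (\<Sum>x\<in>V. if E x u then 1 / (2 * S) else 0)"
    unfolding sum.distrib[symmetric]
  proof (rule sum.cong)
    fix x assume "x \<in> V"
    then show "stat_dist V E x * lazy_P V E x u
        = (if x = u then stat_dist V E x / 2 else 0) + (if E x u then 1 / (2 * S) else 0)"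
      using deg_pos[of x] edge_irrefl by (auto simp: stat_dist_def lazy_P_def S_def)
  qed simp
  also have "(\<Sum>x\<in>V. if E x u then 1 / (2 * S) else 0) = (\<Sum>x\<in>{x \<in> V. E x u}. 1 / (2 * S))"
    using sum.inter_filter[OF finite_V, of "\<lambda>_. 1 / (2 * S)" "\<lambda>x. E x u"] by simp
  also have "\<dots> = real (deg V E u) / (2 * S)"
    by (simp add: card_in_neighbours)
  finally show ?thesis
    using assms finite_V by (simp add: stat_dist_def S_def)
qed

lemma stat_dist_lazy_pt:
  assumes "u \<in> V"
  shows "(\<Sum>x\<in>V. stat_dist V E x * lazy_pt V E t x u) = stat_dist V E u"
  using assms
proof (induction t arbitrary: u)
  case 0
  then show ?case
    using finite_V by (simp add: if_distrib cong: if_cong)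
next
  case (Suc t)
  have "(\<Sum>x\<in>V. stat_dist V E x * lazy_pt V E (Suc t) x u)
      = (\<Sum>x\<in>V. \<Sum>w\<in>V. stat_dist V E x * lazy_pt V E t x w * lazy_P V E w u)"
    by (simp add: sum_distrib_left mult.assoc)
  also have "\<dots> = (\<Sum>w\<in>V. \<Sum>x\<in>V. stat_dist V E x * lazy_pt V E t x w * lazy_P V E w u)"
    by (rule sum.swap)
  also have "\<dots> = (\<Sum>w\<in>V. stat_dist V E w * lazy_P V E w u)"
    using Suc.IH by (simp add: sum_distrib_right[symmetric])
  finally show ?case
    using stat_dist_lazy_P[OF Suc.prems] by simp
qed

lemma srw_avoid_Suc_le: "v \<in> V \<Longrightarrow> srw_avoid V E U (Suc k) v \<le> srw_avoid V E U k v"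
proof (induction k arbitrary: v)
  case 0
  have "(\<Sum>w\<in>{w \<in> V. E v w}. srw_avoid V E U 0 w) \<le> card {w \<in> V. E v w}"
    using sum_mono[of "{w \<in> V. E v w}" "srw_avoid V E U 0" "\<lambda>_. 1"] by auto
  then show ?case
    using deg_pos[OF 0] by (simp add: deg_def divide_le_eq)
next
  case (Suc k)
  have "(\<Sum>w\<in>{w \<in> V. E v w}. srw_avoid V E U (Suc k) w) \<le> (\<Sum>w\<in>{w \<in> V. E v w}. srw_avoid V E U k w)"
    by (rule sum_mono) (use Suc.IH in auto)
  then show ?case
    by (simp add: divide_right_mono)
qed

lemma srw_avoid_antimono: "v \<in> V \<Longrightarrow> k \<le> K \<Longrightarrow> srw_avoid V E U K v \<le> srw_avoid V E U k v"
  using lift_Suc_antimono_le[of "\<lambda>k. srw_avoid V E U k v"] srw_avoid_Suc_le by blast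

fun lazy_avoid :: "'a set \<Rightarrow> nat \<Rightarrow> 'a \<Rightarrow> real" where
  "lazy_avoid U 0 x = (if x \<in> U then 0 else 1)"
| "lazy_avoid U (Suc t) x = (if x \<in> U then 0 else (\<Sum>y\<in>V. lazy_P V E x y * lazy_avoid U t y))"

lemma lazy_avoid_bounds: "x \<in> V \<Longrightarrow> 0 \<le> lazy_avoid U t x \<and> lazy_avoid U t x \<le> 1"
proof (induction t arbitrary: x)
  case 0
  then show ?case by simp
next
  case (Suc t)
  have "(\<Sum>y\<in>V. lazy_P V E x y * lazy_avoid U t y) \<le> (\<Sum>y\<in>V. lazy_P V E x y)"
    using Suc.IH lazy_P_nonneg by (intro sum_mono) (simp add: mult_left_le)
  moreover have "(\<Sum>y\<in>V. lazy_P V E x y * lazy_avoid U t y) \<ge> 0"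
    using Suc.IH lazy_P_nonneg by (intro sum_nonneg) simp
  ultimately show ?case
    using lazy_P_row_sum[OF Suc.prems] by simp
qed

text \<open>A lazy step from \<open>v\<close> either stays at \<open>v\<close>, which by monotonicity in time can only
  help the simple random walk avoid \<open>U\<close>, or moves like the simple random walk.\<close>
lemma srw_avoid_le_lazy_avoid: "v \<in> V \<Longrightarrow> srw_avoid V E U t v \<le> lazy_avoid U t v"
proof (induction t arbitrary: v)
  case 0
  then show ?case by simp
next
  case (Suc t)
  show ?case
  proof (cases "v \<in> U")
    case False
    let ?D = "2 * real (deg V E v)"
    have "srw_avoid V E U (Suc t) v = (\<Sum>w\<in>{w \<in> V. E v w}. srw_avoid V E U t w) / real (deg V E v)"
      using False by (simp only: srw_avoid.simps if_False)
    then have "srw_avoid V E U (Suc t) v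
        = srw_avoid V E U (Suc t) v / 2 + (\<Sum>w\<in>{w \<in> V. E v w}. srw_avoid V E U t w) / ?D"
      by simp
    also have "\<dots> \<le> srw_avoid V E U t v / 2 + (\<Sum>w\<in>{w \<in> V. E v w}. srw_avoid V E U t w) / ?D"
      using srw_avoid_Suc_le[OF Suc.prems, of U t] by simp
    also have "\<dots> \<le> lazy_avoid U t v / 2 + (\<Sum>w\<in>{w \<in> V. E v w}. lazy_avoid U t w) / ?D"
      using Suc.IH by (intro add_mono divide_right_mono sum_mono) (auto simp: Suc.prems)
    also have "\<dots> = lazy_avoid U (Suc t) v"
      using False lazy_P_sum_mult[OF Suc.prems, of "lazy_avoid U t"] by simp
    finally show ?thesis .
  qed simp
qed

text \<open>Markov property at time \<open>s\<close>, dropping the constraint to avoid \<open>U\<close> before it.\<close>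
lemma lazy_avoid_add_le:
  "v \<in> V \<Longrightarrow> lazy_avoid U (s + t) v \<le> (\<Sum>x\<in>V. lazy_pt V E s v x * lazy_avoid U t x)"
proof (induction s arbitrary: v)
  case 0
  then show ?case
    using finite_V by (simp add: of_bool_def[symmetric])
next
  case (Suc s)
  have "lazy_avoid U (Suc s + t) v \<le> (\<Sum>y\<in>V. lazy_P V E v y * lazy_avoid U (s + t) y)"
    using lazy_avoid_bounds lazy_P_nonneg by (auto intro: sum_nonneg)
  also have "\<dots> \<le> (\<Sum>y\<in>V. lazy_P V E v y * (\<Sum>x\<in>V. lazy_pt V E s y x * lazy_avoid U t x))"
    using Suc.IH lazy_P_nonneg by (intro sum_mono mult_left_mono) auto
  also have "\<dots> = (\<Sum>y\<in>V. \<Sum>x\<in>V. lazy_P V E v y * lazy_pt V E s y x * lazy_avoid U t x)"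
    by (simp add: sum_distrib_left mult.assoc)
  also have "\<dots> = (\<Sum>x\<in>V. \<Sum>y\<in>V. lazy_P V E v y * lazy_pt V E s y x * lazy_avoid U t x)"
    by (rule sum.swap)
  also have "\<dots> = (\<Sum>x\<in>V. (\<Sum>y\<in>V. lazy_P V E v y * lazy_pt V E s y x) * lazy_avoid U t x)"
    by (simp add: sum_distrib_right)
  also have "\<dots> = (\<Sum>x\<in>V. lazy_pt V E (Suc s) v x * lazy_avoid U t x)"
    by (rule sum.cong) (simp_all only: lazy_pt_Suc_left[OF Suc.prems])
  finally show ?case .
qed

definition visit_prob :: "'a set \<Rightarrow> nat \<Rightarrow> 'a \<Rightarrow> real" where
  "visit_prob U j x = (\<Sum>u\<in>U. lazy_pt V E j x u)"

definition expected_visits :: "'a set \<Rightarrow> nat set \<Rightarrow> 'a \<Rightarrow> real" where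
  "expected_visits U J x = (\<Sum>j\<in>J. visit_prob U j x)"

lemma visit_prob_nonneg: "visit_prob U j x \<ge> 0"
  unfolding visit_prob_def by (simp add: sum_nonneg lazy_pt_nonneg)

lemma visit_prob_0: "finite U \<Longrightarrow> visit_prob U 0 x = (if x \<in> U then 1 else 0)"
  unfolding visit_prob_def by simp

lemma visit_prob_Suc:
  assumes "x \<in> V"
  shows "visit_prob U (Suc j) x = (\<Sum>y\<in>V. lazy_P V E x y * visit_prob U j y)"
proof -
  have "visit_prob U (Suc j) x = (\<Sum>u\<in>U. \<Sum>y\<in>V. lazy_P V E x y * lazy_pt V E j y u)"
    unfolding visit_prob_def using lazy_pt_Suc_left[OF assms] by simp
  also have "\<dots> = (\<Sum>y\<in>V. \<Sum>u\<in>U. lazy_P V E x y * lazy_pt V E j y u)"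
    by (rule sum.swap)
  finally show ?thesis
    by (simp add: visit_prob_def sum_distrib_left)
qed

lemma stat_dist_visit_prob:
  assumes "U \<subseteq> V"
  shows "(\<Sum>x\<in>V. stat_dist V E x * visit_prob U j x) = (\<Sum>u\<in>U. stat_dist V E u)"
proof -
  have "(\<Sum>x\<in>V. stat_dist V E x * visit_prob U j x)
      = (\<Sum>x\<in>V. \<Sum>u\<in>U. stat_dist V E x * lazy_pt V E j x u)"
    by (simp add: visit_prob_def sum_distrib_left)
  also have "\<dots> = (\<Sum>u\<in>U. \<Sum>x\<in>V. stat_dist V E x * lazy_pt V E j x u)"
    by (rule sum.swap)
  also have "\<dots> = (\<Sum>u\<in>U. stat_dist V E u)"
    using assms stat_dist_lazy_pt by (intro sum.cong) auto
  finally show ?thesis .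
qed

lemma expected_visits_nonneg: "expected_visits U J x \<ge> 0"
  unfolding expected_visits_def by (simp add: sum_nonneg visit_prob_nonneg)

lemma expected_visits_mono:
  "finite J' \<Longrightarrow> J \<subseteq> J' \<Longrightarrow> expected_visits U J x \<le> expected_visits U J' x"
  unfolding expected_visits_def by (rule sum_mono2) (auto simp: visit_prob_nonneg)

lemma expected_visits_Suc:
  assumes "finite U" and "x \<in> V"
  shows "expected_visits U {..Suc m} x
    = (if x \<in> U then 1 else 0) + (\<Sum>y\<in>V. lazy_P V E x y * expected_visits U {..m} y)"
proof -
  have "expected_visits U {..Suc m} x = visit_prob U 0 x + (\<Sum>j\<le>m. visit_prob U (Suc j) x)"
    unfolding expected_visits_def by (rule sum.atMost_Suc_shift)
  also have "(\<Sum>j\<le>m. visit_prob U (Suc j) x) = (\<Sum>j\<le>m. \<Sum>y\<in>V. lazy_P V E x y * visit_prob U j y)"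
    using visit_prob_Suc[OF assms(2)] by simp
  also have "\<dots> = (\<Sum>y\<in>V. \<Sum>j\<le>m. lazy_P V E x y * visit_prob U j y)"
    by (rule sum.swap)
  finally show ?thesis
    using assms(1) by (simp add: visit_prob_0 expected_visits_def sum_distrib_left)
qed

lemma stat_dist_expected_visits:
  assumes "U \<subseteq> V"
  shows "(\<Sum>x\<in>V. stat_dist V E x * expected_visits U J x) = real (card J) * (\<Sum>u\<in>U. stat_dist V E u)"
proof -
  have "(\<Sum>x\<in>V. stat_dist V E x * expected_visits U J x)
      = (\<Sum>j\<in>J. \<Sum>x\<in>V. stat_dist V E x * visit_prob U j x)"
    unfolding expected_visits_def sum_distrib_left by (rule sum.swap)
  then show ?thesis
    using stat_dist_visit_prob[OF assms] by simp
qed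

text \<open>Visits to \<open>U\<close> only start once \<open>U\<close> is hit, and from then on at most \<open>B m\<close>
  further visits are expected.\<close>
lemma expected_visits_le_hit_prob:
  assumes "finite U"
    and bound: "\<And>k y. y \<in> V \<Longrightarrow> expected_visits U {..k} y \<le> B k"
    and B_mono: "\<And>k. B k \<le> B (Suc k)"
    and "x \<in> V"
  shows "expected_visits U {..m} x \<le> (1 - lazy_avoid U m x) * B m"
  using \<open>x \<in> V\<close>
proof (induction m arbitrary: x)
  case 0
  then show ?case
    using bound[OF 0, of 0] assms(1) by (simp add: expected_visits_def visit_prob_0 split: if_splits)
next
  case (Suc m)
  show ?case
  proof (cases "x \<in> U")
    case False
    have "expected_visits U {..Suc m} x = (\<Sum>y\<in>V. lazy_P V E x y * expected_visits U {..m} y)"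
      using expected_visits_Suc[OF assms(1) Suc.prems] False by simp
    also have "\<dots> \<le> (\<Sum>y\<in>V. lazy_P V E x y * ((1 - lazy_avoid U m y) * B m))"
      using Suc.IH lazy_P_nonneg by (intro sum_mono mult_left_mono) auto
    also have "\<dots> = ((\<Sum>y\<in>V. lazy_P V E x y) - (\<Sum>y\<in>V. lazy_P V E x y * lazy_avoid U m y)) * B m"
      unfolding sum_subtractf[symmetric] sum_distrib_right
      by (rule sum.cong) (simp_all add: algebra_simps)
    also have "\<dots> = (1 - lazy_avoid U (Suc m) x) * B m"
      using lazy_P_row_sum[OF Suc.prems] False by simp
    also have "\<dots> \<le> (1 - lazy_avoid U (Suc m) x) * B (Suc m)"
      using lazy_avoid_bounds[OF Suc.prems, of U "Suc m"] by (intro mult_left_mono[OF B_mono]) linarith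
    finally show ?thesis .
  qed (use bound[OF Suc.prems] in simp)
qed

end

locale min_degree_graph =
  fixes V :: "'a set" and E :: "'a \<Rightarrow> 'a \<Rightarrow> bool" and d :: real
  assumes simple: "simple_graph V E"
    and d_pos: "d > 0"
    and min_deg: "\<And>u. u \<in> V \<Longrightarrow> d \<le> real (deg V E u)"

sublocale min_degree_graph \<subseteq> walk_graph V E
proof
  show "simple_graph V E" by (rule simple)
  show "deg V E u > 0" if "u \<in> V" for u
    using min_deg[OF that] d_pos by simp
qed

context min_degree_graph
begin

text \<open>Each lazy step keeps half of the mass in place and spreads the other half
  with weights at most \<open>1 / (2 d)\<close>.\<close>
lemma lazy_pt_le:
  assumes "x \<in> V" and "w \<in> V"
  shows "lazy_pt V E t x w \<le> (if x = w then (1 / 2) ^ t else 0) + 1 / d"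
  using assms(2)
proof (induction t arbitrary: w)
  case 0
  then show ?case using d_pos by simp
next
  case (Suc t)
  have spread: "(\<Sum>u\<in>V. lazy_pt V E t x u * (if E u w then 1 / (2 * real (deg V E u)) else 0))
      \<le> (\<Sum>u\<in>V. lazy_pt V E t x u * (1 / (2 * d)))"
  proof (intro sum_mono mult_left_mono)
    fix u assume "u \<in> V"
    then show "(if E u w then 1 / (2 * real (deg V E u)) else 0) \<le> 1 / (2 * d)"
      using min_deg[of u] d_pos by (auto simp: frac_le)
  qed (rule lazy_pt_nonneg)
  have "lazy_pt V E (Suc t) x w
      = (\<Sum>u\<in>V. lazy_pt V E t x u * (if u = w then 1 / 2 else 0))
        + (\<Sum>u\<in>V. lazy_pt V E t x u * (if E u w then 1 / (2 * real (deg V E u)) else 0))"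
    by (simp add: lazy_P_def distrib_left sum.distrib)
  also have "(\<Sum>u\<in>V. lazy_pt V E t x u * (if u = w then 1 / 2 else 0)) = lazy_pt V E t x w / 2"
    using Suc.prems finite_V by (simp add: if_distrib cong: if_cong)
  finally have split: "lazy_pt V E (Suc t) x w = lazy_pt V E t x w / 2
      + (\<Sum>u\<in>V. lazy_pt V E t x u * (if E u w then 1 / (2 * real (deg V E u)) else 0))" .
  have "(\<Sum>u\<in>V. lazy_pt V E t x u * (1 / (2 * d))) = 1 / (2 * d)"
    unfolding sum_distrib_right[symmetric] using lazy_pt_row_sum[OF assms(1)] by simp
  then have "lazy_pt V E (Suc t) x w \<le> lazy_pt V E t x w / 2 + 1 / (2 * d)"
    using split spread by linarith
  also have "\<dots> \<le> ((if x = w then (1 / 2) ^ t else 0) + 1 / d) / 2 + 1 / (2 * d)"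
    using Suc by simp
  also have "\<dots> = (if x = w then (1 / 2) ^ Suc t else 0) + 1 / d"
    by (cases "x = w") (simp_all add: field_simps)
  finally show ?case .
qed

lemma visit_prob_le:
  assumes "U \<subseteq> V" and "x \<in> V"
  shows "visit_prob U j x \<le> (1 / 2) ^ j + real (card U) / d"
proof -
  have "visit_prob U j x \<le> (\<Sum>u\<in>U. (if x = u then (1 / 2) ^ j else 0) + 1 / d)"
    unfolding visit_prob_def using assms by (intro sum_mono lazy_pt_le) auto
  also have "\<dots> = (if x \<in> U then (1 / 2) ^ j else 0) + real (card U) / d"
    using finite_subset[OF assms(1) finite_V] by (simp add: sum.distrib)
  also have "\<dots> \<le> (1 / 2) ^ j + real (card U) / d"
    by simp
  finally show ?thesis .
qed

lemma expected_visits_interval_le: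
  assumes "U \<subseteq> V" and "x \<in> V"
  shows "expected_visits U {a..b} x \<le> 2 * (1 / 2) ^ a + real (b + 1 - a) * real (card U) / d"
proof -
  have "expected_visits U {a..b} x \<le> (\<Sum>j = a..b. (1 / 2) ^ j + real (card U) / d)"
    unfolding expected_visits_def using visit_prob_le[OF assms] by (intro sum_mono)
  also have "\<dots> = (\<Sum>j = a..b. (1 / 2) ^ j) + real (b + 1 - a) * real (card U) / d"
    by (simp add: sum.distrib)
  finally show ?thesis
    using sum_half_powers_le[of a b] by linarith
qed

lemma stat_dist_subset_ge:
  assumes "U \<subseteq> V"
  shows "(\<Sum>u\<in>U. stat_dist V E u) \<ge> d * real (card U) / real (card V) ^ 2"
proof (cases "U = {}")
  case False
  define S where "S = real (\<Sum>u\<in>V. deg V E u)"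
  have "V \<noteq> {}"
    using False assms by auto
  then have "S > 0"
    unfolding S_def using degree_sum_pos by (simp del: of_nat_sum)
  have "real (deg V E u) \<le> real (card V)" for u
    unfolding deg_def using finite_V by (simp add: card_mono)
  then have "S \<le> real (card V) ^ 2"
    using sum_mono[of V "\<lambda>u. real (deg V E u)" "\<lambda>_. real (card V)"]
    by (simp add: S_def power2_eq_square)
  moreover have "d * real (card U) \<le> (\<Sum>u\<in>U. real (deg V E u))"
    using assms min_deg sum_mono[of U "\<lambda>_. d" "\<lambda>u. real (deg V E u)"] by (auto simp: mult.commute)
  ultimately have "d * real (card U) / real (card V) ^ 2 \<le> (\<Sum>u\<in>U. real (deg V E u)) / S"
    using \<open>S > 0\<close> d_pos by (intro frac_le) (auto intro: sum_nonneg)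
  also have "\<dots> = (\<Sum>u\<in>U. stat_dist V E u)"
    unfolding stat_dist_def S_def by (simp add: sum_divide_distrib)
  finally show ?thesis .
qed simp

lemma lazy_hit_prob_ge:
  assumes "v \<in> V" and "U \<subseteq> V"
    and mixed: "tv_dist V (lazy_pt V E t v) (stat_dist V E) \<le> \<eta>" and "0 \<le> \<eta>"
  shows "((real s + 1) * (\<Sum>u\<in>U. stat_dist V E u)
           - \<eta> * (2 * (1 / 2) ^ s + (real s + 1) * real (card U) / d))
         / (2 + (2 * real s + 1) * real (card U) / d)
    \<le> 1 - lazy_avoid U (t + 2 * s) v"
proof -
  define \<mu> where "\<mu> = lazy_pt V E t v"
  define W where "W = expected_visits U {s..2 * s}"
  define M where "M = 2 * (1 / 2) ^ s + (real s + 1) * real (card U) / d"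
  define C where "C = 2 + (2 * real s + 1) * real (card U) / d"
  have "finite U"
    using assms(2) finite_V finite_subset by blast
  have "C > 0"
    unfolding C_def using d_pos by (simp add: add_pos_nonneg)
  have \<mu>_sum: "sum \<mu> V = 1"
    unfolding \<mu>_def using lazy_pt_row_sum[OF assms(1)] .
  have W_le_hit: "W x \<le> (1 - lazy_avoid U (2 * s) x) * C" if "x \<in> V" for x
  proof -
    have "W x \<le> expected_visits U {..2 * s} x"
      unfolding W_def by (rule expected_visits_mono) auto
    also have "\<dots> \<le> (1 - lazy_avoid U (2 * s) x) * (2 + (real (2 * s) + 1) * real (card U) / d)"
    proof (rule expected_visits_le_hit_prob[OF \<open>finite U\<close> _ _ that])
      show "expected_visits U {..k} y \<le> 2 + (real k + 1) * real (card U) / d" if "y \<in> V" for k y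
        using expected_visits_interval_le[OF assms(2) that, of 0 k] by (simp add: atLeast0AtMost add.commute)
      show "2 + (real k + 1) * real (card U) / d \<le> 2 + (real (Suc k) + 1) * real (card U) / d" for k
        using d_pos by (simp add: divide_right_mono mult_right_mono)
    qed
    finally show ?thesis
      by (simp add: C_def)
  qed
  have W_bounds: "0 \<le> W x \<and> W x \<le> M" if "x \<in> V" for x
    using expected_visits_interval_le[OF assms(2) that, of s "2 * s"] expected_visits_nonneg
    by (simp add: W_def M_def Suc_diff_le add.commute)
  have "(real s + 1) * (\<Sum>u\<in>U. stat_dist V E u) = (\<Sum>x\<in>V. stat_dist V E x * W x)"
    using stat_dist_expected_visits[OF assms(2)] by (simp add: W_def)
  also have "\<dots> \<le> (\<Sum>x\<in>V. \<mu> x * W x) + M * tv_dist V \<mu> (stat_dist V E)"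
    using sum_mult_diff_le_tv_dist[OF finite_V \<mu>_sum stat_dist_sum W_bounds] assms(1) by fastforce
  also have "\<dots> \<le> (\<Sum>x\<in>V. \<mu> x * W x) + M * \<eta>"
    using mixed W_bounds[OF assms(1)] unfolding \<mu>_def by (simp add: mult_left_mono)
  finally have "(real s + 1) * (\<Sum>u\<in>U. stat_dist V E u) - \<eta> * M \<le> (\<Sum>x\<in>V. \<mu> x * W x)"
    by (simp add: mult.commute)
  also have "\<dots> \<le> (\<Sum>x\<in>V. \<mu> x * ((1 - lazy_avoid U (2 * s) x) * C))"
    using W_le_hit lazy_pt_nonneg unfolding \<mu>_def by (intro sum_mono mult_left_mono) auto
  also have "\<dots> = (\<Sum>x\<in>V. C * (\<mu> x - \<mu> x * lazy_avoid U (2 * s) x))"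
    by (rule sum.cong) (simp_all add: algebra_simps)
  also have "\<dots> = C * (1 - (\<Sum>x\<in>V. \<mu> x * lazy_avoid U (2 * s) x))"
    unfolding sum_distrib_left[symmetric] sum_subtractf \<mu>_sum ..
  also have "\<dots> \<le> C * (1 - lazy_avoid U (t + 2 * s) v)"
    using lazy_avoid_add_le[OF assms(1)] \<open>C > 0\<close> unfolding \<mu>_def by simp
  finally show ?thesis
    using \<open>C > 0\<close> by (simp add: M_def C_def pos_divide_le_eq mult.commute)
qed

end

lemma le_nat_floor_add_one: "x \<le> real (nat \<lfloor>x\<rfloor>) + 1"
  using floor_correct[of x] by (cases "\<lfloor>x\<rfloor> < 0") (auto simp: of_nat_nat)

lemma half_power_floor_sqrt_le:
  fixes \<epsilon> n :: real
  assumes "0 < \<epsilon>" and "1 / \<epsilon>\<^sup>2 \<le> n"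
  shows "(1 / 2) ^ nat \<lfloor>sqrt n\<rfloor> \<le> \<epsilon>"
proof -
  define s where "s = nat \<lfloor>sqrt n\<rfloor>"
  have "1 / \<epsilon> = sqrt (1 / \<epsilon>\<^sup>2)"
    using assms(1) by (simp add: real_sqrt_divide)
  also have "\<dots> \<le> sqrt n"
    using assms(2) by simp
  also have "\<dots> \<le> real s + 1"
    unfolding s_def by (rule le_nat_floor_add_one)
  also have "\<dots> \<le> 2 ^ s"
    using less_exp[of s] by (metis Suc_leI of_nat_Suc of_nat_le_iff of_nat_numeral of_nat_power add.commute)
  finally have "1 / \<epsilon> \<le> 2 ^ s" .
  then show ?thesis
    using assms(1) by (simp add: s_def power_one_over field_simps)
qed

lemma hit_ratio_ge:
  fixes \<epsilon> \<delta> n a p :: real and s :: nat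
  assumes "0 < \<epsilon>" and "\<epsilon> \<le> \<delta> / 8" and "\<epsilon> \<le> \<delta>\<^sup>2 / 8"
    and "1 / \<epsilon>\<^sup>2 \<le> n" and "\<epsilon> * sqrt n \<le> a" and "s = nat \<lfloor>sqrt n\<rfloor>" and "a * \<delta> / n \<le> p"
  shows "\<epsilon> * \<delta> / 4 \<le> ((real s + 1) * p - \<epsilon> / 2 * (2 * (1 / 2) ^ s + (real s + 1) * a / (\<delta> * n)))
                        / (2 + (2 * real s + 1) * a / (\<delta> * n))"
proof -
  have "\<delta> > 0" and "n > 0"
    using assms(1,2,4) by (auto intro: less_le_trans[of 0 "1 / \<epsilon>\<^sup>2"])
  then have "a \<ge> 0"
    using assms(1,5) by (smt (verit) mult_nonneg_nonneg real_sqrt_ge_zero)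
  define b where "b = (real s + 1) * a / n"
  have "sqrt n \<le> real s + 1"
    unfolding assms(6) by (rule le_nat_floor_add_one)
  then have "\<epsilon> * n \<le> (real s + 1) * a"
    using mult_mono[OF \<open>sqrt n \<le> real s + 1\<close> assms(5)] \<open>n > 0\<close> \<open>\<epsilon> > 0\<close>
    by (simp add: mult.commute mult.left_commute)
  then have "\<epsilon> \<le> b"
    unfolding b_def using \<open>n > 0\<close> by (simp add: le_divide_eq)
  have "\<epsilon> / 2 * (2 * (1 / 2) ^ s) \<le> \<epsilon> * \<epsilon>"
    using half_power_floor_sqrt_le[OF assms(1,4)] assms(1,6) by simp
  moreover have "b * \<delta> \<le> (real s + 1) * p"
    using mult_left_mono[OF assms(7), of "real s + 1"] unfolding b_def by simp
  moreover have "\<epsilon> / 2 * ((real s + 1) * a / (\<delta> * n)) = \<epsilon> * b / (2 * \<delta>)"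
    unfolding b_def by simp
  ultimately have numerator: "b * \<delta> - \<epsilon> * \<epsilon> - \<epsilon> * b / (2 * \<delta>)
      \<le> (real s + 1) * p - \<epsilon> / 2 * (2 * (1 / 2) ^ s + (real s + 1) * a / (\<delta> * n))"
    by (simp add: distrib_left)
  have "(2 * real s + 1) * a \<le> 2 * ((real s + 1) * a)"
    using \<open>a \<ge> 0\<close> by (simp add: algebra_simps)
  then have "(2 * real s + 1) * a / (\<delta> * n) \<le> 2 * ((real s + 1) * a) / (\<delta> * n)"
    using \<open>\<delta> > 0\<close> \<open>n > 0\<close> by (simp add: divide_right_mono)
  then have denominator: "2 + (2 * real s + 1) * a / (\<delta> * n) \<le> 2 + 2 * b / \<delta>"
    unfolding b_def by (simp add: mult.commute)
  have "\<epsilon> * b / (2 * \<delta>) \<le> b * \<delta> / 16"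
    using mult_right_mono[OF assms(3), of b] \<open>\<epsilon> \<le> b\<close> \<open>\<delta> > 0\<close> assms(1)
    by (simp add: field_simps power2_eq_square)
  moreover have "\<epsilon> * b / 2 \<le> b * \<delta> / 16" and "\<epsilon> * \<epsilon> \<le> \<epsilon> * \<delta> / 8" and "\<epsilon> * \<delta> \<le> b * \<delta>"
    using assms(1,2) \<open>\<epsilon> \<le> b\<close> \<open>\<delta> > 0\<close> by (simp_all add: field_simps mult_left_mono mult_right_mono)
  moreover have "\<epsilon> * \<delta> / 4 * (2 + 2 * b / \<delta>) = \<epsilon> * \<delta> / 2 + \<epsilon> * b / 2"
    using \<open>\<delta> > 0\<close> by (simp add: field_simps)
  ultimately have "\<epsilon> * \<delta> / 4 * (2 + 2 * b / \<delta>)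
      \<le> (real s + 1) * p - \<epsilon> / 2 * (2 * (1 / 2) ^ s + (real s + 1) * a / (\<delta> * n))"
    using numerator mult_pos_pos[OF assms(1) \<open>\<delta> > 0\<close>] by linarith
  moreover have "\<epsilon> * \<delta> / 4 * (2 + (2 * real s + 1) * a / (\<delta> * n)) \<le> \<epsilon> * \<delta> / 4 * (2 + 2 * b / \<delta>)"
    using denominator assms(1) \<open>\<delta> > 0\<close> by (simp add: mult_left_mono)
  moreover have "0 < 2 + (2 * real s + 1) * a / (\<delta> * n)"
    using \<open>\<delta> > 0\<close> \<open>n > 0\<close> \<open>a \<ge> 0\<close> by (simp add: add_pos_nonneg)
  ultimately show ?thesis
    by (simp add: le_divide_eq)
qed

lemma mixed_before_t_mix:
  assumes "finite V" and "v \<in> V"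
    and "\<forall>x\<in>V. \<exists>t. tv_dist V (lazy_pt V E t x) (stat_dist V E) < \<eta>"
  shows "\<exists>t \<le> t_mix V E \<eta>. tv_dist V (lazy_pt V E t v) (stat_dist V E) < \<eta>"
proof -
  let ?t = "LEAST t. tv_dist V (lazy_pt V E t v) (stat_dist V E) < \<eta>"
  have "?t \<le> t_mix V E \<eta>"
    unfolding t_mix_def using assms(1,2) by (intro Max_ge) auto
  moreover have "tv_dist V (lazy_pt V E ?t v) (stat_dist V E) < \<eta>"
    using assms(2,3) by (meson LeastI_ex)
  ultimately show ?thesis
    by blast
qed

lemma srw_avoid_min_degree_le:
  assumes "0 < \<epsilon>" and "\<epsilon> \<le> \<delta> / 8" and "\<epsilon> \<le> \<delta>\<^sup>2 / 8"
    and "simple_graph V E" and "1 / \<epsilon>\<^sup>2 \<le> real (card V)"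
    and "\<forall>u\<in>V. \<delta> * real (card V) \<le> real (deg V E u)"
    and "U \<subseteq> V" and "\<epsilon> * sqrt (real (card V)) \<le> real (card U)" and "v \<in> V"
    and "\<forall>x\<in>V. \<exists>t. tv_dist V (lazy_pt V E t x) (stat_dist V E) < \<epsilon> / 2"
  shows "srw_avoid V E U (2 * (t_mix V E (\<epsilon> / 2) + nat \<lfloor>sqrt (real (card V))\<rfloor>)) v
    \<le> 1 - \<epsilon> * \<delta> / 4"
proof -
  define n where "n = real (card V)"
  define s where "s = nat \<lfloor>sqrt n\<rfloor>"
  have "finite V"
    using assms(4) by (simp add: simple_graph_def)
  then have "n > 0"
    unfolding n_def using assms(9) card_gt_0_iff by auto
  interpret min_degree_graph V E "\<delta> * n"
    using assms(1,2,4,6) \<open>n > 0\<close> by unfold_locales (auto simp: n_def)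
  obtain t where "t \<le> t_mix V E (\<epsilon> / 2)"
    and mixed: "tv_dist V (lazy_pt V E t v) (stat_dist V E) < \<epsilon> / 2"
    using mixed_before_t_mix[OF finite_V assms(9,10)] by blast
  have "srw_avoid V E U (2 * (t_mix V E (\<epsilon> / 2) + s)) v \<le> srw_avoid V E U (t + 2 * s) v"
    using \<open>t \<le> t_mix V E (\<epsilon> / 2)\<close> by (intro srw_avoid_antimono assms(9)) simp
  also have "\<dots> \<le> lazy_avoid U (t + 2 * s) v"
    by (rule srw_avoid_le_lazy_avoid[OF assms(9)])
  also have "\<dots> \<le> 1 - \<epsilon> * \<delta> / 4"
  proof -
    have "real (card U) * \<delta> / n \<le> (\<Sum>u\<in>U. stat_dist V E u)"
      using stat_dist_subset_ge[OF assms(7)] \<open>n > 0\<close> by (simp add: n_def power2_eq_square mult.commute)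
    then have "\<epsilon> * \<delta> / 4 \<le> ((real s + 1) * (\<Sum>u\<in>U. stat_dist V E u)
        - \<epsilon> / 2 * (2 * (1 / 2) ^ s + (real s + 1) * real (card U) / (\<delta> * n)))
        / (2 + (2 * real s + 1) * real (card U) / (\<delta> * n))"
      using assms(1-3,5,8) by (intro hit_ratio_ge) (auto simp: n_def s_def)
    also have "\<dots> \<le> 1 - lazy_avoid U (t + 2 * s) v"
      using mixed assms(1) by (intro lazy_hit_prob_ge assms(7,9)) auto
    finally show ?thesis
      by linarith
  qed
  finally show ?thesis
    unfolding s_def n_def .
qed

theorem claim3p3:
  shows "\<forall>\<delta>::real. \<delta> > 0 \<longrightarrow> (\<exists>c::real. c > 0 \<and>
    (\<forall>\<epsilon>::real. \<forall>(V::nat set) E U v.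
       0 < \<epsilon> \<and> \<epsilon> < c \<and> simple_graph V E \<and>
       real (card V) \<ge> 1 / \<epsilon>^2 \<and>
       (\<forall>u\<in>V. real (deg V E u) \<ge> \<delta> * real (card V)) \<and>
       U \<subseteq> V \<and> real (card U) \<ge> \<epsilon> * sqrt (real (card V)) \<and>
       v \<in> V \<and>
       (\<forall>x\<in>V. \<exists>t. tv_dist V (lazy_pt V E t x) (stat_dist V E) < \<epsilon> / 2)
       \<longrightarrow> srw_avoid V E U
             (2 * (t_mix V E (\<epsilon> / 2) + nat \<lfloor>sqrt (real (card V))\<rfloor>)) v
           \<le> 1 - \<epsilon> * \<delta> / 4))"
  apply (intro allI impI)
  subgoal for \<delta>
    apply (rule exI[of _ "min (\<delta> / 8) (\<delta>\<^sup>2 / 8)"])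
    apply (intro conjI allI impI)
     apply simp
    apply (elim conjE)
    apply (rule srw_avoid_min_degree_le)
             apply auto
    done
  done

end
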